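(* Let $k$ be an odd integer with $k\ge 5$, let $D$ be a strong $k$-quasi-transitive digraph with $\mathrm{diam}(D)\ge k+2$, let $u,v\in V(D)$ with $d(u,v)=k+2$, and let $P$ be a shortest $(u,v)$-path in $D$. Then $D[V(P)]$ is either a semicomplete digraph or a semicomplete bipartite digraph.
   Context: All digraphs are finite, without loops or multiple arcs (opposite arcs allowed). Vertices $x,y$ are adjacent if $xy$ or $yx$ is an arc. For $k\ge 2$, $D$ is $k$-quasi-transitive if for every path $x_0x_1\ldots x_k$ of length $k$, $x_0$ and $x_k$ are adjacent. $d(x,y)$ is the length of a shortest $(x,y)$-path, $\mathrm{diam}(D)=\max_{x,y}d(x,y)$. $D[S]$ is the induced subdigraph. A semicomplete digraph: every two distinct vertices adjacent. A semicomplete bipartite digraph: there is a bipartition $(X,Y)$ of the vertex set with no arcs inside $X$ or $Y$ and every vertex of $X$ adjacent to every vertex of $Y$. *)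

theory Defs
  imports Main
begin

definition digraph :: "'a set \<Rightarrow> ('a \<times> 'a) set \<Rightarrow> bool" where
  "digraph V A \<longleftrightarrow> finite V \<and> A \<subseteq> V \<times> V \<and> (\<forall>x. (x, x) \<notin> A)"

definition adjacent :: "('a \<times> 'a) set \<Rightarrow> 'a \<Rightarrow> 'a \<Rightarrow> bool" where
  "adjacent A x y \<longleftrightarrow> (x, y) \<in> A \<or> (y, x) \<in> A"

text \<open>A path is a nonempty list of distinct vertices with consecutive arcs;
  its length is the number of arcs, i.e. length xs - 1.\<close>

definition is_path :: "('a \<times> 'a) set \<Rightarrow> 'a list \<Rightarrow> bool" where
  "is_path A xs \<longleftrightarrow> xs \<noteq> [] \<and> distinct xs \<and>
     (\<forall>i. Suc i < length xs \<longrightarrow> (xs ! i, xs ! Suc i) \<in> A)"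

definition is_path_from_to :: "('a \<times> 'a) set \<Rightarrow> 'a list \<Rightarrow> 'a \<Rightarrow> 'a \<Rightarrow> bool" where
  "is_path_from_to A xs x y \<longleftrightarrow> is_path A xs \<and> hd xs = x \<and> last xs = y"

definition k_quasi_transitive :: "nat \<Rightarrow> ('a \<times> 'a) set \<Rightarrow> bool" where
  "k_quasi_transitive k A \<longleftrightarrow>
     (\<forall>xs. is_path A xs \<and> length xs = k + 1 \<longrightarrow> adjacent A (hd xs) (last xs))"

definition strong :: "'a set \<Rightarrow> ('a \<times> 'a) set \<Rightarrow> bool" where
  "strong V A \<longleftrightarrow> (\<forall>x\<in>V. \<forall>y\<in>V. \<exists>xs. is_path_from_to A xs x y)"

text \<open>Distance: length of a shortest (x,y)-path (only meaningful when one exists).\<close>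

definition dist :: "('a \<times> 'a) set \<Rightarrow> 'a \<Rightarrow> 'a \<Rightarrow> nat" where
  "dist A x y = (LEAST n. \<exists>xs. is_path_from_to A xs x y \<and> length xs = n + 1)"

definition diam :: "'a set \<Rightarrow> ('a \<times> 'a) set \<Rightarrow> nat" where
  "diam V A = Max {dist A x y | x y. x \<in> V \<and> y \<in> V}"

definition induced_arcs :: "('a \<times> 'a) set \<Rightarrow> 'a set \<Rightarrow> ('a \<times> 'a) set" where
  "induced_arcs A S = A \<inter> (S \<times> S)"

definition semicomplete :: "'a set \<Rightarrow> ('a \<times> 'a) set \<Rightarrow> bool" where
  "semicomplete V A \<longleftrightarrow> (\<forall>x\<in>V. \<forall>y\<in>V. x \<noteq> y \<longrightarrow> adjacent A x y)"

definition semicomplete_bipartite :: "'a set \<Rightarrow> ('a \<times> 'a) set \<Rightarrow> bool" where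
  "semicomplete_bipartite V A \<longleftrightarrow>
     (\<exists>X Y. X \<union> Y = V \<and> X \<inter> Y = {} \<and> X \<noteq> {} \<and> Y \<noteq> {} \<and>
        (\<forall>x\<in>X. \<forall>x'\<in>X. (x, x') \<notin> A) \<and> (\<forall>y\<in>Y. \<forall>y'\<in>Y. (y, y') \<notin> A) \<and>
        (\<forall>x\<in>X. \<forall>y\<in>Y. adjacent A x y))"

end

(*
  Write P = x_0 ... x_{k+2} and call an arc x_j x_i with i < j backward. A shortest path has no
  forward chords, so whenever a path on k + 1 vertices from x_y to x_x can be routed along
  segments of P joined by known backward arcs, k-quasi-transitivity forces the backward arc
  x_y x_x. Starting from the arcs x_{i+k} x_i this yields every backward arc spanning an odd
  distance of at least 3, so vertices at odd distance along P are always adjacent.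
  Arcs spanning an even distance stand or fall together: any of them forces x_{k+1} x_0 (by
  pushing it outwards one step at a time), and x_{k+1} x_0 forces all of them (by induction on
  the distance). Hence D[V(P)] is either semicomplete or its adjacencies are exactly the pairs at
  odd distance, i.e. it is semicomplete bipartite with the two index parity classes as sides.
  Reversing P in the converse digraph preserves all hypotheses, which halves the case analysis.
*)

theory Submission
  imports Defs
begin

lemma odd_breakpoint_below:
  fixes k x y :: nat
  assumes "odd k" "x + 4 \<le> y" "y \<le> k - 1" "even (x + y)" "x \<le> 1 \<Longrightarrow> x + 6 \<le> y"
  obtains m where "x + 1 \<le> m" "m + 2 \<le> y" "odd m" "3 \<le> m" "m + 4 \<le> k"
proof -
  have "x \<le> 1 \<or> 2 \<le> x \<and> even x \<or> 3 \<le> x \<and> odd x"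
    by presburger
  then consider "x \<le> 1" | "2 \<le> x" "even x" | "3 \<le> x" "odd x"
    by blast
  then show ?thesis
  proof cases
    case 1
    then show ?thesis
      using that[of 3] assms(2,3,5) by auto
  next
    case 2
    then show ?thesis
      using that[of "x + 1"] assms(2,3) by auto
  next
    case 3
    have "y \<noteq> k - 1"
      using 3 assms(1,4) by auto
    then show ?thesis
      using that[of "x + 2"] 3 assms(2,3) by auto
  qed
qed

text \<open>Breakpoints of the path y..a+k, m+1..y-1, x+1..m, a..x on k + 1 vertices, which closes
  the even gap from x to y using the smaller even gap from x + 1 to y - 1 and two odd gaps.\<close>

lemma even_gap_breakpoints:
  fixes k x y :: nat
  assumes "odd k" "5 \<le> k" "x + 4 \<le> y" "y \<le> k + 2" "even (x + y)" "y \<le> x + k - 1"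
    and "y = x + 4 \<Longrightarrow> 2 \<le> x \<and> x + 4 \<le> k"
  obtains a m where "a \<le> x" "a \<le> 2" "y \<le> a + k" "x + 1 \<le> m" "m + 2 \<le> y" "odd (a + m)"
    "a + 3 \<le> m" "m + 4 \<le> a + k"
proof -
  have six: "x + 6 \<le> y" if "y \<noteq> x + 4"
    using that assms(3,5) by presburger
  consider "y \<le> k - 1" | "y = k" | "y = k + 1" | "y = k + 2"
    using assms(4) by linarith
  then show ?thesis
  proof cases
    case 1
    then obtain m where "x + 1 \<le> m" "m + 2 \<le> y" "odd m" "3 \<le> m" "m + 4 \<le> k"
      using odd_breakpoint_below[of k x y] assms six by force
    then show ?thesis
      using that[of 0 m] 1 by auto
  next
    case 2
    then have "odd x"
      using assms(1,5) by simp
    then consider "x = 1" | "3 \<le> x"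
      by (cases "x = 1") (auto elim: oddE)
    then show ?thesis
    proof cases
      case 1
      then show ?thesis
        using that[of 1 4] \<open>y = k\<close> assms(7) six by force
    next
      case 2
      then show ?thesis
        using that[of 1 "x + 1"] \<open>odd x\<close> \<open>y = k\<close> assms(3) by auto
    qed
  next
    case 3
    then have "even x"
      using assms(1,5) by simp
    then show ?thesis
      using that[of 1 "x + 2"] 3 assms(6,7) six by force
  next
    case 4
    then have "odd x"
      using assms(1,5) by simp
    then show ?thesis
      using that[of 2 "x + 2"] 4 assms(6,7) six by force
  qed
qed

text \<open>R i j stands for the arc x_i x_j between the vertices x_0, ..., x_{k+2} of a shortest path.\<close>

locale kqt_geodesic =
  fixes R :: "nat \<Rightarrow> nat \<Rightarrow> bool" and k :: nat
  assumes odd_k: "odd k" and five_le_k: "5 \<le> k"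
    and step: "\<And>i. i < k + 2 \<Longrightarrow> R i (Suc i)"
    and no_forward_chord: "\<And>i j. i < j \<Longrightarrow> j \<le> k + 2 \<Longrightarrow> R i j \<Longrightarrow> j = Suc i"
    and quasi_transitive: "\<And>L. distinct L \<Longrightarrow> set L \<subseteq> {..k + 2} \<Longrightarrow> length L = k + 1 \<Longrightarrow>
      successively R L \<Longrightarrow> R (hd L) (last L) \<or> R (last L) (hd L)"
begin

lemma successively_upt: "b \<le> k + 2 \<Longrightarrow> successively R [a..<Suc b]"
  by (auto simp: successively_conv_nth step simp del: upt_Suc)

lemma back_arc_of_path:
  assumes "distinct L" "set L \<subseteq> {..k + 2}" "length L = k + 1" "successively R L"
    and "hd L = y" "last L = x" "x + 1 < y"
  shows "R y x"
proof -
  have "L \<noteq> []"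
    using assms(3) by auto
  then have "y \<le> k + 2"
    using assms(2,5) hd_in_set[of L] by auto
  then show ?thesis
    using quasi_transitive[OF assms(1-4)] no_forward_chord[of x y] assms(5-7) by auto
qed

text \<open>The path y..b1, a2..x consists of forward arcs of the geodesic and the single arc b1 a2;
  once it has k + 1 vertices, quasi-transitivity and the absence of forward chords force the
  backward arc from y to x.\<close>

lemma back_arc_two_segments:
  assumes "R b1 a2"
    and "y \<le> b1" "b1 \<le> k + 2" "a2 \<le> x" "x + 1 < y"
    and "(b1 - y + 1) + (x - a2 + 1) = k + 1"
  shows "R y x"
  by (rule back_arc_of_path[of "[y..<Suc b1] @ [a2..<Suc x]"])
    (use assms in \<open>auto simp: successively_append_iff successively_upt hd_upt last_upt
      simp del: upt_Suc\<close>)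

lemma back_arc_three_segments:
  assumes "R b1 a2" "R b2 a3"
    and "y \<le> b1" "b1 \<le> k + 2" "a2 \<le> b2" "b2 < y" "a3 \<le> x" "x < a2"
    and "(b1 - y + 1) + (b2 - a2 + 1) + (x - a3 + 1) = k + 1"
  shows "R y x"
  by (rule back_arc_of_path[of "[y..<Suc b1] @ [a2..<Suc b2] @ [a3..<Suc x]"])
    (use assms in \<open>auto simp: successively_append_iff successively_upt hd_upt last_upt
      simp del: upt_Suc\<close>)

lemma back_arc_four_segments:
  assumes "R b1 a2" "R b2 a3" "R b3 a4"
    and "y \<le> b1" "b1 \<le> k + 2" "a2 \<le> b2" "b2 < y" "a3 \<le> b3" "b3 < a2" "a4 \<le> x" "x < a3"
    and "(b1 - y + 1) + (b2 - a2 + 1) + (b3 - a3 + 1) + (x - a4 + 1) = k + 1"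
  shows "R y x"
  by (rule back_arc_of_path[of "[y..<Suc b1] @ [a2..<Suc b2] @ [a3..<Suc b3] @ [a4..<Suc x]"])
    (use assms in \<open>auto simp: successively_append_iff successively_upt hd_upt last_upt
      simp del: upt_Suc\<close>)

lemma back_arc_span_k:
  assumes "i \<le> 2"
  shows "R (k + i) i"
proof -
  have "set [i..<Suc (k + i)] \<subseteq> {..k + 2}"
    using assms by auto
  then show ?thesis
    using quasi_transitive[of "[i..<Suc (k + i)]"] no_forward_chord[of i "k + i"] assms five_le_k
    by (auto simp: successively_upt hd_upt last_upt simp del: upt_Suc)
qed

lemma back_arc_end_to_start: "R (k + 2) 0"
proof -
  have "R (k + 2) 2" "R k 0"
    using back_arc_span_k[of 2] back_arc_span_k[of 0] by simp_all
  then show ?thesis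
    by (rule back_arc_three_segments) (use five_le_k in auto)
qed

lemma back_arc_span_3:
  assumes "t \<le> k - 1"
  shows "R (t + 3) t"
  using back_arc_end_to_start by (rule back_arc_two_segments) (use assms five_le_k in auto)

lemma back_arc_odd_to_0: "odd y \<Longrightarrow> 3 \<le> y \<Longrightarrow> y \<le> k + 2 \<Longrightarrow> R y 0"
proof (induction y rule: less_induct)
  case (less y)
  have "y = 3 \<or> y = k + 2 \<or> 5 \<le> y \<and> y \<le> k + 1"
    using less.prems odd_k by presburger
  then consider "y = 3" | "y = k + 2" | "5 \<le> y" "y \<le> k + 1"
    by blast
  then show ?case
  proof cases
    case 1
    then show ?thesis using back_arc_span_3[of 0] five_le_k by simp
  next
    case 2
    then show ?thesis using back_arc_end_to_start by simp
  next
    case 3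
    have "R (k + 1) 1" "R (y - 2) 0"
      using back_arc_span_k[of 1] less.IH[of "y - 2"] less.prems 3 by auto
    then show ?thesis
      by (rule back_arc_three_segments) (use 3 in auto)
  qed
qed

lemma back_arc_even_to_1: "even y \<Longrightarrow> 4 \<le> y \<Longrightarrow> y \<le> k + 1 \<Longrightarrow> R y 1"
proof (induction y rule: less_induct)
  case (less y)
  show ?case
  proof (cases "y = 4")
    case True
    then show ?thesis using back_arc_span_3[of 1] five_le_k by simp
  next
    case False
    with less.prems have "6 \<le> y" by presburger
    have "R (k + 2) 2" "R (y - 2) 1"
      using back_arc_span_k[of 2] less.IH[of "y - 2"] less.prems \<open>6 \<le> y\<close> by auto
    then show ?thesis
      by (rule back_arc_three_segments) (use \<open>6 \<le> y\<close> less.prems in auto)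
  qed
qed

lemma kqt_geodesic_dual: "kqt_geodesic (\<lambda>i j. R (k + 2 - j) (k + 2 - i)) k"
proof
  show "odd k" "5 \<le> k"
    using odd_k five_le_k by auto
  show "R (k + 2 - Suc i) (k + 2 - i)" if "i < k + 2" for i
  proof -
    have "k + 2 - i = Suc (k + 2 - Suc i)"
      using that by arith
    then show ?thesis
      using step[of "k + 2 - Suc i"] that by simp
  qed
  show "j = Suc i" if "i < j" "j \<le> k + 2" "R (k + 2 - j) (k + 2 - i)" for i j
  proof -
    have "k + 2 - i = Suc (k + 2 - j)"
      using no_forward_chord[of "k + 2 - j" "k + 2 - i"] that by auto
    then show ?thesis
      using that by arith
  qed
  show "R (k + 2 - last L) (k + 2 - hd L) \<or> R (k + 2 - hd L) (k + 2 - last L)"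
    if "distinct L" "set L \<subseteq> {..k + 2}" "length L = k + 1"
      and "successively (\<lambda>i j. R (k + 2 - j) (k + 2 - i)) L" for L
  proof -
    let ?L = "rev (map (\<lambda>i. k + 2 - i) L)"
    have "inj_on (\<lambda>i. k + 2 - i) {..k + 2}"
      by (intro inj_onI) auto
    then have "inj_on (\<lambda>i. k + 2 - i) (set L)"
      using that(2) by (rule inj_on_subset)
    then have "R (hd ?L) (last ?L) \<or> R (last ?L) (hd ?L)"
      using that by (intro quasi_transitive) (auto simp: distinct_map successively_map)
    moreover have "L \<noteq> []"
      using that(3) by auto
    ultimately show ?thesis
      by (auto simp: hd_rev last_rev hd_map last_map)
  qed
qed

lemma back_arc_odd_to_2:
  assumes "odd y" "5 \<le> y" "y \<le> k + 2"
  shows "R y 2"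
proof -
  interpret dual: kqt_geodesic "\<lambda>i j. R (k + 2 - j) (k + 2 - i)" k
    by (rule kqt_geodesic_dual)
  have "R (k + 2) 4"
    using dual.back_arc_odd_to_0[of "k - 2"] odd_k five_le_k by auto
  moreover have "R (y - 1) 1"
    using back_arc_even_to_1[of "y - 1"] assms by auto
  ultimately show ?thesis
    by (rule back_arc_three_segments) (use assms in auto)
qed

lemma back_arc_from_k2_odd:
  assumes "odd (k + 2 - x)" "3 \<le> k + 2 - x"
  shows "R (k + 2) x"
proof -
  interpret dual: kqt_geodesic "\<lambda>i j. R (k + 2 - j) (k + 2 - i)" k
    by (rule kqt_geodesic_dual)
  show ?thesis
    using dual.back_arc_odd_to_0[of "k + 2 - x"] assms by auto
qed

lemma back_arc_from_k_odd:
  assumes "odd (k + 2 - x)" "5 \<le> k + 2 - x"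
  shows "R k x"
proof -
  interpret dual: kqt_geodesic "\<lambda>i j. R (k + 2 - j) (k + 2 - i)" k
    by (rule kqt_geodesic_dual)
  show ?thesis
    using dual.back_arc_odd_to_2[of "k + 2 - x"] assms by auto
qed

lemma back_arc_from_k1_even:
  assumes "even (k + 2 - x)" "4 \<le> k + 2 - x" "1 \<le> x"
  shows "R (k + 1) x"
proof -
  interpret dual: kqt_geodesic "\<lambda>i j. R (k + 2 - j) (k + 2 - i)" k
    by (rule kqt_geodesic_dual)
  show ?thesis
    using dual.back_arc_even_to_1[of "k + 2 - x"] assms by auto
qed

lemma back_arc_odd_gap_inner:
  assumes "3 \<le> x" "x + 3 \<le> y" "y \<le> k - 1" "odd (x + y)"
  shows "R y x"
proof -
  have gap: "x < y" "y \<le> k + 2" "odd (y - x)" "3 \<le> y - x"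
    using assms by auto
  show ?thesis
  proof (cases "even x")
    case True
    have "even (k + 2 - (x + 1))" "4 \<le> k + 2 - (x + 1)" "even (y - 1)" "4 \<le> y - 1"
      using True assms(1,3) gap odd_k by presburger+
    then have "R (k + 1) (x + 1)" "R (y - 1) 1"
      using back_arc_from_k1_even[of "x + 1"] back_arc_even_to_1[of "y - 1"] assms(3) by auto
    then show ?thesis
      by (rule back_arc_three_segments) (use assms gap in auto)
  next
    case False
    have "odd (k + 2 - (x + 1))" "5 \<le> k + 2 - (x + 1)" "odd (y - 1)" "3 \<le> y - 1"
      using False assms(1,3) gap odd_k by presburger+
    then have "R k (x + 1)" "R (y - 1) 0"
      using back_arc_from_k_odd[of "x + 1"] back_arc_odd_to_0[of "y - 1"] assms(3) by auto
    then show ?thesis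
      by (rule back_arc_three_segments) (use assms gap in auto)
  qed
qed

lemma back_arc_odd_gap:
  assumes "x + 3 \<le> y" "y \<le> k + 2" "odd (x + y)"
  shows "R y x"
proof -
  have gap: "x < y" "y \<le> k + 2" "odd (y - x)" "3 \<le> y - x"
    using assms by auto
  consider "x = 0" | "x = 1" | "x = 2" | "y = k + 2" | "y = k + 1" | "y = k"
    | "3 \<le> x" "y \<le> k - 1"
    using gap(2) by linarith
  then show ?thesis
  proof cases
    case 1
    then show ?thesis using back_arc_odd_to_0[of y] gap by auto
  next
    case 2
    then have "even y" "4 \<le> y" "y \<le> k + 1"
      using gap odd_k by presburger+
    then show ?thesis using back_arc_even_to_1[of y] 2 by auto
  next
    case 3
    then show ?thesis using back_arc_odd_to_2[of y] gap by auto
  next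
    case 4
    then show ?thesis using back_arc_from_k2_odd[of x] gap by auto
  next
    case 5
    then have "even (k + 2 - x)" "4 \<le> k + 2 - x" "1 \<le> x"
      using gap odd_k by presburger+
    then show ?thesis using back_arc_from_k1_even[of x] 5 by auto
  next
    case 6
    then have "odd (k + 2 - x)" "5 \<le> k + 2 - x"
      using gap odd_k by presburger+
    then show ?thesis using back_arc_from_k_odd[of x] 6 by auto
  next
    case 7
    then show ?thesis using back_arc_odd_gap_inner assms by blast
  qed
qed

lemma adjacent_odd_gap:
  assumes "i < j" "j \<le> k + 2" "odd (i + j)"
  shows "R i j \<or> R j i"
proof (cases "j = Suc i")
  case True
  then show ?thesis using step assms by auto
next
  case False
  moreover have "j \<noteq> i + 2"
    using assms(3) by auto
  ultimately have "i + 3 \<le> j"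
    using assms(1) by linarith
  then show ?thesis using back_arc_odd_gap assms(2,3) by auto
qed

lemma arc_k1_0_of_even_gap_arc_to_0:
  assumes "even p" "2 \<le> p" "p \<le> k + 2" "R p 0"
  shows "R (k + 1) 0"
proof -
  have "p \<le> k - 3 \<or> p = k - 1 \<or> p = k + 1"
    using assms odd_k by presburger
  then consider "p \<le> k - 3" | "p = k - 1" | "p = k + 1"
    by blast
  then show ?thesis
  proof cases
    case 1
    have "R (k + 1) (p + 1)"
      by (rule back_arc_odd_gap) (use 1 assms odd_k in auto)
    moreover have "R k 2"
      by (rule back_arc_odd_gap) (use odd_k five_le_k in auto)
    ultimately show ?thesis
      using assms(4) by (rule back_arc_four_segments) (use 1 assms in auto)
  next
    case 2
    have "R (k + 1) 1"
      using back_arc_span_k[of 1] by simp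
    then show ?thesis
      using assms(4) by (rule back_arc_three_segments) (use 2 five_le_k in auto)
  next
    case 3
    then show ?thesis using assms by simp
  qed
qed

lemma arc_k2_1_of_even_gap_arc_to_1:
  assumes "odd p" "3 \<le> p" "p \<le> k + 2" "R p 1"
  shows "R (k + 2) 1"
proof -
  have "p \<le> k - 2 \<or> p = k \<or> p = k + 2"
    using assms odd_k by presburger
  then consider "p \<le> k - 2" | "p = k" | "p = k + 2"
    by blast
  then show ?thesis
  proof cases
    case 1
    have "R (k + 2) (p + 1)"
      by (rule back_arc_odd_gap) (use 1 assms odd_k in auto)
    moreover have "R (k + 1) 3"
      by (rule back_arc_odd_gap) (use odd_k five_le_k in auto)
    ultimately show ?thesis
      using assms(4) by (rule back_arc_four_segments) (use 1 assms in auto)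
  next
    case 2
    have "R (k + 2) 2"
      using back_arc_span_k[of 2] by simp
    then show ?thesis
      using assms(4) by (rule back_arc_three_segments) (use 2 five_le_k in auto)
  next
    case 3
    then show ?thesis using assms by simp
  qed
qed

lemma even_gap_arc_to_2_shifts_to_0:
  assumes "even p" "4 \<le> p" "p \<le> k" "R p 2"
  shows "R (p + 2) 0"
proof -
  have "R (k + 2) 4"
    by (rule back_arc_odd_gap) (use odd_k five_le_k in auto)
  moreover note \<open>R p 2\<close>
  moreover have "R 3 0"
    using back_arc_span_3[of 0] five_le_k by simp
  ultimately show ?thesis
    by (rule back_arc_four_segments) (use assms five_le_k in auto)
qed

lemma arc_k1_0_iff_arc_k2_1: "R (k + 1) 0 \<longleftrightarrow> R (k + 2) 1"
proof
  assume "R (k + 1) 0"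
  then have "R 3 1"
    by (rule back_arc_two_segments) (use five_le_k in auto)
  then show "R (k + 2) 1"
    using arc_k2_1_of_even_gap_arc_to_1[of 3] five_le_k by auto
next
  assume "R (k + 2) 1"
  then have "R 4 2"
    by (rule back_arc_two_segments) (use five_le_k in auto)
  then have "R 6 0"
    using even_gap_arc_to_2_shifts_to_0[of 4] five_le_k by auto
  then show "R (k + 1) 0"
    using arc_k1_0_of_even_gap_arc_to_0[of 6] five_le_k by auto
qed

lemma arc_k1_0_of_even_gap_arc_from_low:
  assumes "q \<le> 2" "q + 2 \<le> p" "p \<le> k + 2" "even (q + p)" "R p q"
  shows "R (k + 1) 0"
proof -
  have "q = 0 \<or> q = 1 \<or> q = 2 \<and> p \<le> k \<or> q = 2 \<and> p = k + 1"
    using assms(1,3,4) odd_k by presburger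
  then consider "q = 0" | "q = 1" | "q = 2" "p \<le> k" | "q = 2" "p = k + 1"
    by blast
  then show ?thesis
  proof cases
    case 1
    then show ?thesis using arc_k1_0_of_even_gap_arc_to_0[of p] assms by auto
  next
    case 2
    then have "R (k + 2) 1"
      using arc_k2_1_of_even_gap_arc_to_1[of p] assms by auto
    then show ?thesis using arc_k1_0_iff_arc_k2_1 by simp
  next
    case 3
    then have "R (p + 2) 0"
      using even_gap_arc_to_2_shifts_to_0[of p] assms by auto
    then show ?thesis
      using arc_k1_0_of_even_gap_arc_to_0[of "p + 2"] 3 assms by auto
  next
    case 4
    have "R k 0"
      using back_arc_span_k[of 0] by simp
    with assms(5) show ?thesis
      by (rule back_arc_three_segments) (use 4 five_le_k in auto)
  qed
qed

lemma arc_k1_0_of_even_gap_arc_near_ends: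
  assumes "q \<le> 2 \<or> k \<le> p" "q + 2 \<le> p" "p \<le> k + 2" "even (q + p)" "R p q"
  shows "R (k + 1) 0"
proof (cases "q \<le> 2")
  case True
  then show ?thesis using arc_k1_0_of_even_gap_arc_from_low assms by blast
next
  case False
  interpret dual: kqt_geodesic "\<lambda>i j. R (k + 2 - j) (k + 2 - i)" k
    by (rule kqt_geodesic_dual)
  have "(k + 2 - p) + (k + 2 - q) + (q + p) = 2 * (k + 2)"
    using assms(2,3) by simp
  then have "even ((k + 2 - p) + (k + 2 - q))"
    using assms(4) by (metis dvd_triv_left even_add)
  moreover have "k + 2 - p \<le> 2" "k + 2 - p + 2 \<le> k + 2 - q"
    using False assms(1-3) by auto
  moreover have "R (k + 2 - (k + 2 - p)) (k + 2 - (k + 2 - q))"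
    using assms by simp
  ultimately have "R (k + 2) 1"
    using dual.arc_k1_0_of_even_gap_arc_from_low[of "k + 2 - p" "k + 2 - q"] by simp
  then show ?thesis using arc_k1_0_iff_arc_k2_1 by simp
qed

lemma even_gap_arc_shift_out:
  assumes "3 \<le> q" "q + 2 \<le> p" "p \<le> k - 1" "even (q + p)" "R p q"
  shows "R (p + 1) (q - 1)"
proof (cases "odd q")
  case True
  then have "odd p"
    using assms(4) by auto
  moreover have "even (k - 1)"
    using odd_k by simp
  ultimately have "p \<le> k - 2"
    using assms(3) by (cases "p = k - 1") auto
  have "R k (q + 1)"
    by (rule back_arc_odd_gap) (use True \<open>p \<le> k - 2\<close> assms(2) odd_k in auto)
  moreover note \<open>R p q\<close>
  moreover have "R q 0"
    by (rule back_arc_odd_gap) (use True assms in auto)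
  ultimately show ?thesis
    by (rule back_arc_four_segments) (use \<open>p \<le> k - 2\<close> assms in auto)
next
  case False
  then have "4 \<le> q"
    using assms(1) by presburger
  have "R (k + 1) (q + 1)"
    by (rule back_arc_odd_gap) (use False assms(2,3) odd_k in auto)
  moreover note \<open>R p q\<close>
  moreover have "R q 1"
    by (rule back_arc_odd_gap) (use False \<open>4 \<le> q\<close> assms in auto)
  ultimately show ?thesis
    by (rule back_arc_four_segments) (use \<open>4 \<le> q\<close> assms in auto)
qed

lemma arc_k1_0_of_even_gap_arc:
  "q + 2 \<le> p \<Longrightarrow> p \<le> k + 2 \<Longrightarrow> even (q + p) \<Longrightarrow> R p q \<Longrightarrow> R (k + 1) 0"
proof (induction q arbitrary: p)
  case 0
  then show ?case using arc_k1_0_of_even_gap_arc_near_ends by blast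
next
  case (Suc q)
  show ?case
  proof (cases "Suc q \<le> 2 \<or> k \<le> p")
    case True
    then show ?thesis using arc_k1_0_of_even_gap_arc_near_ends Suc.prems by blast
  next
    case False
    then have "3 \<le> Suc q" "p \<le> k - 1"
      by auto
    then have "R (p + 1) q"
      using even_gap_arc_shift_out[of "Suc q" p] Suc.prems by simp
    moreover have "q + 2 \<le> p + 1" "p + 1 \<le> k + 2" "even (q + (p + 1))"
      using False Suc.prems by auto
    ultimately show ?thesis using Suc.IH by blast
  qed
qed

lemma back_arc_span_2:
  assumes "R (k + 1) 0" "x \<le> k"
  shows "R (x + 2) x"
proof (cases "x \<le> k - 1")
  case True
  show ?thesis
    using assms(1) by (rule back_arc_two_segments) (use True five_le_k in auto)
next
  case False
  have "R (k + 2) 1"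
    using assms(1) arc_k1_0_iff_arc_k2_1 by simp
  then show ?thesis
    by (rule back_arc_two_segments) (use assms False five_le_k in auto)
qed

lemma back_arc_span_4_near_ends:
  assumes "R (k + 1) 0" "x + 4 \<le> k + 2" "x \<le> 1 \<or> k \<le> x + 3"
  shows "R (x + 4) x"
  using assms(3)
proof
  assume "x \<le> 1"
  have "R (k + (x + 1)) (x + 1)"
    using back_arc_span_k[of "x + 1"] \<open>x \<le> 1\<close> by simp
  moreover have "R (x + 2) x"
    using back_arc_span_2[of x] assms(1) \<open>x \<le> 1\<close> five_le_k by simp
  ultimately show ?thesis
    by (rule back_arc_three_segments) (use \<open>x \<le> 1\<close> five_le_k in auto)
next
  assume "k \<le> x + 3"
  have "R (x + 2 + 2) (x + 2)"
    using back_arc_span_2[of "x + 2"] assms(1,2) by simp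
  moreover have "R (x + 3) (x + 3 - k)"
    using back_arc_span_k[of "x + 3 - k"] assms(2) \<open>k \<le> x + 3\<close> by simp
  ultimately show ?thesis
    by (rule back_arc_three_segments) (use assms(2) \<open>k \<le> x + 3\<close> five_le_k in auto)
qed

lemma back_arc_even_gap_step:
  assumes "R (y - 1) (x + 1)" "x + 4 \<le> y" "y \<le> k + 2" "even (x + y)" "y \<le> x + k - 1"
    and "y = x + 4 \<Longrightarrow> 2 \<le> x \<and> x + 4 \<le> k"
  shows "R y x"
proof -
  obtain a m where am: "a \<le> x" "a \<le> 2" "y \<le> a + k" "x + 1 \<le> m" "m + 2 \<le> y"
    "odd (a + m)" "a + 3 \<le> m" "m + 4 \<le> a + k"
    using even_gap_breakpoints[of k x y] assms(2-6) odd_k five_le_k by blast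
  have "R (a + k) (m + 1)"
    by (rule back_arc_odd_gap) (use am odd_k in auto)
  moreover note \<open>R (y - 1) (x + 1)\<close>
  moreover have "R m a"
    by (rule back_arc_odd_gap) (use am in auto)
  ultimately show ?thesis
    by (rule back_arc_four_segments) (use am assms(2,3) in auto)
qed

lemma back_arc_even_gap:
  "R (k + 1) 0 \<Longrightarrow> x < y \<Longrightarrow> y \<le> k + 2 \<Longrightarrow> even (x + y) \<Longrightarrow> R y x"
proof (induction "y - x" arbitrary: x y rule: less_induct)
  case less
  have "even (y - x)"
    using less.prems(2,4) by auto
  moreover have "d \<noteq> 1 \<and> d \<noteq> 3 \<and> d \<noteq> k \<and> d \<noteq> k + 2" if "even d" for d
    using that odd_k by auto
  ultimately have "y - x \<noteq> 1" "y - x \<noteq> 3" "y - x \<noteq> k" "y - x \<noteq> k + 2"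
    by blast+
  then consider "y = x + 2" | "y = x + k + 1" | "y = x + 4" "x \<le> 1 \<or> k \<le> x + 3"
    | "x + 4 \<le> y" "y \<le> x + k - 1" "y = x + 4 \<Longrightarrow> 2 \<le> x \<and> x + 4 \<le> k"
    using less.prems(2,3) by linarith
  then show ?case
  proof cases
    case 1
    then show ?thesis using back_arc_span_2[of x] less.prems by simp
  next
    case 2
    then have "x = 0 \<and> y = k + 1 \<or> x = 1 \<and> y = k + 2"
      using less.prems by auto
    then show ?thesis using less.prems(1) arc_k1_0_iff_arc_k2_1 by auto
  next
    case 3
    then show ?thesis using back_arc_span_4_near_ends less.prems by simp
  next
    case 4
    have "x + 1 + (y - 1) = x + y"
      using less.prems(2) by simp
    then have "y - 1 - (x + 1) < y - x" "x + 1 < y - 1" "y - 1 \<le> k + 2"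
      "even (x + 1 + (y - 1))"
      using less.prems 4 by auto
    then have "R (y - 1) (x + 1)"
      using less.hyps less.prems(1) by blast
    then show ?thesis
      by (rule back_arc_even_gap_step) (use less.prems 4 in auto)
  qed
qed

lemma adjacent_of_arc_k1_0:
  assumes "R (k + 1) 0" "i < j" "j \<le> k + 2"
  shows "R i j \<or> R j i"
proof (cases "even (i + j)")
  case True
  then show ?thesis
    using back_arc_even_gap[OF assms] by simp
next
  case False
  then show ?thesis
    using adjacent_odd_gap[OF assms(2,3)] by simp
qed

lemma adjacent_iff_odd_of_not_arc_k1_0:
  assumes "\<not> R (k + 1) 0" "i < j" "j \<le> k + 2"
  shows "R i j \<or> R j i \<longleftrightarrow> odd (i + j)"
proof
  assume adjacent: "R i j \<or> R j i"
  show "odd (i + j)"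
  proof
    assume "even (i + j)"
    then have "j \<noteq> Suc i"
      by auto
    then have "i + 2 \<le> j"
      using assms(2) by linarith
    have "\<not> R i j"
      using no_forward_chord[OF assms(2,3)] \<open>j \<noteq> Suc i\<close> by blast
    with adjacent have "R j i"
      by blast
    then have "R (k + 1) 0"
      by (rule arc_k1_0_of_even_gap_arc[OF \<open>i + 2 \<le> j\<close> assms(3) \<open>even (i + j)\<close>])
    with assms(1) show False
      by simp
  qed
next
  assume "odd (i + j)"
  then show "R i j \<or> R j i"
    by (rule adjacent_odd_gap[OF assms(2,3)])
qed

lemma adjacency_dichotomy:
  "(\<forall>j\<le>k + 2. \<forall>i<j. R i j \<or> R j i) \<or> (\<forall>j\<le>k + 2. \<forall>i<j. R i j \<or> R j i \<longleftrightarrow> odd (i + j))"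
proof (cases "R (k + 1) 0")
  case True
  then show ?thesis
    using adjacent_of_arc_k1_0 by blast
next
  case False
  then show ?thesis
    using adjacent_iff_odd_of_not_arc_k1_0 by blast
qed

end

lemma semicomplete_path_vertices:
  assumes "\<forall>j<length P. \<forall>i<j. (P ! i, P ! j) \<in> A \<or> (P ! j, P ! i) \<in> A"
  shows "semicomplete (set P) (induced_arcs A (set P))"
  unfolding semicomplete_def
proof (intro ballI impI)
  fix a b
  assume "a \<in> set P" "b \<in> set P" "a \<noteq> b"
  then obtain i j where "i < length P" "j < length P" "a = P ! i" "b = P ! j" "i \<noteq> j"
    by (metis in_set_conv_nth)
  then have "(a, b) \<in> A \<or> (b, a) \<in> A"
    using assms by (cases "i < j") (auto dest: not_less_iff_gr_or_eq[THEN iffD1])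
  then show "adjacent (induced_arcs A (set P)) a b"
    using \<open>a \<in> set P\<close> \<open>b \<in> set P\<close> by (auto simp: adjacent_def induced_arcs_def)
qed

lemma semicomplete_bipartite_path_vertices:
  assumes "distinct P" "2 \<le> length P" "\<And>x. (x, x) \<notin> A"
    and "\<forall>j<length P. \<forall>i<j. (P ! i, P ! j) \<in> A \<or> (P ! j, P ! i) \<in> A \<longleftrightarrow> odd (i + j)"
  shows "semicomplete_bipartite (set P) (induced_arcs A (set P))"
proof -
  have adjacent_iff: "(P ! i, P ! j) \<in> A \<or> (P ! j, P ! i) \<in> A \<longleftrightarrow> odd (i + j)"
    if "i < length P" "j < length P" for i j
  proof -
    consider "i < j" | "j < i" | "i = j"
      by linarith
    then show ?thesis
      using assms(3,4) that by cases (auto simp: add.commute)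
  qed
  define X where "X = {P ! i | i. i < length P \<and> even i}"
  define Y where "Y = {P ! i | i. i < length P \<and> odd i}"
  have "X \<union> Y = set P"
    unfolding X_def Y_def set_conv_nth by auto
  moreover have "X \<inter> Y = {}"
    unfolding X_def Y_def using assms(1) by (auto simp: nth_eq_iff_index_eq)
  moreover have "X \<noteq> {}"
    unfolding X_def using assms(2) by (auto intro!: exI[of _ 0])
  moreover have "Y \<noteq> {}"
    unfolding Y_def using assms(2) by (auto intro!: exI[of _ 1])
  moreover have "\<forall>x\<in>X. \<forall>x'\<in>X. (x, x') \<notin> induced_arcs A (set P)"
    unfolding X_def induced_arcs_def using adjacent_iff by fastforce
  moreover have "\<forall>y\<in>Y. \<forall>y'\<in>Y. (y, y') \<notin> induced_arcs A (set P)"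
    unfolding Y_def induced_arcs_def using adjacent_iff by fastforce
  moreover have "\<forall>x\<in>X. \<forall>y\<in>Y. adjacent (induced_arcs A (set P)) x y"
    unfolding X_def Y_def induced_arcs_def adjacent_def using adjacent_iff by fastforce
  ultimately show ?thesis
    unfolding semicomplete_bipartite_def by blast
qed

lemma dist_le_path_length:
  assumes "is_path_from_to A xs x y"
  shows "dist A x y \<le> length xs - 1"
proof -
  have "xs \<noteq> []"
    using assms by (simp add: is_path_from_to_def is_path_def)
  then show ?thesis
    unfolding dist_def by (intro Least_le) (use assms in auto)
qed

lemma successively_upt_path:
  "is_path A P \<Longrightarrow> b \<le> length P \<Longrightarrow> successively (\<lambda>i j. (P ! i, P ! j) \<in> A) [a..<b]"
  by (auto simp: successively_conv_nth is_path_def)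

lemma is_path_map_nth:
  assumes "distinct P" "L \<noteq> []" "distinct L" "set L \<subseteq> {..<length P}"
    and "successively (\<lambda>i j. (P ! i, P ! j) \<in> A) L"
  shows "is_path A (map ((!) P) L)"
proof -
  have "inj_on ((!) P) (set L)"
    using assms(1,4) by (intro inj_on_nth) auto
  moreover have "successively (\<lambda>a b. (a, b) \<in> A) (map ((!) P) L)"
    using assms(5) by (simp add: successively_map)
  ultimately show ?thesis
    using assms(2,3) by (auto simp: is_path_def successively_conv_nth distinct_map)
qed

lemma shortest_path_no_chord:
  assumes "is_path_from_to A P u v" "length P = dist A u v + 1" "Suc i < j" "j < length P"
  shows "(P ! i, P ! j) \<notin> A"
proof
  assume chord: "(P ! i, P ! j) \<in> A"
  let ?L = "[0..<Suc i] @ [j..<length P]"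
  have P: "is_path A P" "hd P = u" "last P = v" "P \<noteq> []"
    using assms(1) by (auto simp: is_path_from_to_def is_path_def)
  have "successively (\<lambda>i j. (P ! i, P ! j) \<in> A) ?L"
    using successively_upt_path[OF P(1)] chord assms(3,4)
    by (auto simp: successively_append_iff hd_upt last_upt simp del: upt_Suc)
  then have "is_path A (map ((!) P) ?L)"
    using P(1) assms(3,4) by (intro is_path_map_nth) (auto simp: is_path_def)
  moreover have "hd (map ((!) P) ?L) = u" "last (map ((!) P) ?L) = v"
  proof -
    have nonempty: "?L \<noteq> []"
      by simp
    have "hd (map ((!) P) ?L) = P ! hd ?L" "last (map ((!) P) ?L) = P ! last ?L"
      using hd_map[OF nonempty] last_map[OF nonempty] by blast+
    moreover have "hd ?L = 0" "last ?L = length P - 1"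
      using P(4) assms(4) by (simp_all add: hd_append hd_upt last_append last_upt del: upt_Suc)
    ultimately show "hd (map ((!) P) ?L) = u" "last (map ((!) P) ?L) = v"
      using P(2-4) by (simp_all add: hd_conv_nth last_conv_nth)
  qed
  ultimately have "dist A u v \<le> length ?L - 1"
    using dist_le_path_length[of A "map ((!) P) ?L" u v] by (simp add: is_path_from_to_def)
  then show False
    using assms(2-4) by simp
qed

lemma kqt_geodesic_shortest_path:
  assumes "odd k" "5 \<le> k" "k_quasi_transitive k A"
    and "is_path_from_to A P u v" "length P = dist A u v + 1" "dist A u v = k + 2"
  shows "kqt_geodesic (\<lambda>i j. (P ! i, P ! j) \<in> A) k"
proof
  have P: "is_path A P" "distinct P" "length P = k + 3"
    using assms(4-6) by (auto simp: is_path_from_to_def is_path_def)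
  show "odd k" "5 \<le> k"
    using assms(1,2) .
  show "(P ! i, P ! Suc i) \<in> A" if "i < k + 2" for i
    using P(1,3) that unfolding is_path_def by auto
  show "j = Suc i" if "i < j" "j \<le> k + 2" "(P ! i, P ! j) \<in> A" for i j
  proof (rule ccontr)
    assume "j \<noteq> Suc i"
    then have "Suc i < j"
      using that(1) by simp
    then show False
      using shortest_path_no_chord[OF assms(4,5)] P(3) that by simp
  qed
  show "(P ! hd L, P ! last L) \<in> A \<or> (P ! last L, P ! hd L) \<in> A"
    if "distinct L" "set L \<subseteq> {..k + 2}" "length L = k + 1"
      and "successively (\<lambda>i j. (P ! i, P ! j) \<in> A) L" for L
  proof -
    have "L \<noteq> []"
      using that(3) by auto
    have "is_path A (map ((!) P) L)"
      using P that \<open>L \<noteq> []\<close> by (intro is_path_map_nth) auto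
    then have "adjacent A (hd (map ((!) P) L)) (last (map ((!) P) L))"
      using assms(3) that(3) unfolding k_quasi_transitive_def by simp
    then show ?thesis
      using \<open>L \<noteq> []\<close> by (simp add: adjacent_def hd_map last_map)
  qed
qed

theorem theorem2p5:
  fixes V :: "'a set" and A :: "('a \<times> 'a) set" and k :: nat
    and u v :: 'a and P :: "'a list"
  assumes "digraph V A"
    and "odd k" and "k \<ge> 5"
    and "strong V A"
    and "k_quasi_transitive k A"
    and "diam V A \<ge> k + 2"
    and "u \<in> V" and "v \<in> V" and "dist A u v = k + 2"
    and "is_path_from_to A P u v" and "length P = dist A u v + 1"
  shows "semicomplete (set P) (induced_arcs A (set P)) \<or>
         semicomplete_bipartite (set P) (induced_arcs A (set P))"
proof -
  interpret kqt_geodesic "\<lambda>i j. (P ! i, P ! j) \<in> A" k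
    by (rule kqt_geodesic_shortest_path[OF assms(2,3,5,10,11,9)])
  have length_P: "length P = k + 3"
    using assms(9,11) by simp
  from adjacency_dichotomy show ?thesis
  proof
    assume "\<forall>j\<le>k + 2. \<forall>i<j. (P ! i, P ! j) \<in> A \<or> (P ! j, P ! i) \<in> A"
    then have "semicomplete (set P) (induced_arcs A (set P))"
      by (intro semicomplete_path_vertices) (simp add: length_P)
    then show ?thesis ..
  next
    assume "\<forall>j\<le>k + 2. \<forall>i<j. (P ! i, P ! j) \<in> A \<or> (P ! j, P ! i) \<in> A \<longleftrightarrow> odd (i + j)"
    moreover have "distinct P" "\<And>x. (x, x) \<notin> A"
      using assms(1,10) by (auto simp: digraph_def is_path_from_to_def is_path_def)
    ultimately have "semicomplete_bipartite (set P) (induced_arcs A (set P))"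
      by (intro semicomplete_bipartite_path_vertices) (simp_all add: length_P)
    then show ?thesis ..
  qed
qed

end
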